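(* Let $\sim$ be a right congruence on $\Sigma^*$ of finite index and let $\approx$ be its suffix expansion. Then $|\Sigma^{\le n}/{\approx}|$ is polynomially bounded in $n$ if and only if $\sim$ has no critical tuple.
   Context: A right congruence on $\Sigma^*$ is an equivalence $\sim$ with $x\sim y\Rightarrow xz\sim yz$ for all $z$. Its suffix expansion $\approx$ is defined by $a_1\cdots a_n\approx b_1\cdots b_m$ iff $n=m$ and $a_i\cdots a_n\sim b_i\cdots b_n$ for all $1\le i\le n$. A critical tuple in $\sim$ is a tuple $(u_2,v_2,u,v)$ of words with $|u_2|=|v_2|\ge1$, $u=u_1u_2$ and $v=v_1v_2$ for some words $u_1,v_1$, and $u_2w\not\sim v_2w$ for all $w\in\{u,v\}^*$. *)

theory Defs
  imports Main
begin

definition right_congruence :: "'a set \<Rightarrow> ('a list \<times> 'a list) set \<Rightarrow> bool" where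
  "right_congruence Alph R \<longleftrightarrow> equiv (lists Alph) R \<and>
     (\<forall>x y z. (x, y) \<in> R \<longrightarrow> z \<in> lists Alph \<longrightarrow> (x @ z, y @ z) \<in> R)"

definition finite_index :: "'a set \<Rightarrow> ('a list \<times> 'a list) set \<Rightarrow> bool" where
  "finite_index Alph R \<longleftrightarrow> finite (lists Alph // R)"

text \<open>Suffix expansion: a_1..a_n ~~ b_1..b_m iff n = m and a_i..a_n ~ b_i..b_n for all 1 <= i <= n
  (the suffix starting at position i+1 is drop i).\<close>
definition suffix_expansion :: "'a set \<Rightarrow> ('a list \<times> 'a list) set \<Rightarrow> ('a list \<times> 'a list) set" where
  "suffix_expansion Alph R = {(u, v). u \<in> lists Alph \<and> v \<in> lists Alph \<and>
     length u = length v \<and> (\<forall>i < length u. (drop i u, drop i v) \<in> R)}"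

definition word_star :: "'a list set \<Rightarrow> 'a list set" where
  "word_star W = concat ` lists W"

definition critical_tuple :: "'a set \<Rightarrow> ('a list \<times> 'a list) set \<Rightarrow>
    'a list \<Rightarrow> 'a list \<Rightarrow> 'a list \<Rightarrow> 'a list \<Rightarrow> bool" where
  "critical_tuple Alph R u2 v2 u v \<longleftrightarrow>
     u2 \<in> lists Alph \<and> v2 \<in> lists Alph \<and> u \<in> lists Alph \<and> v \<in> lists Alph \<and>
     length u2 = length v2 \<and> length u2 \<ge> 1 \<and>
     (\<exists>u1. u = u1 @ u2) \<and> (\<exists>v1. v = v1 @ v2) \<and>
     (\<forall>w \<in> word_star {u, v}. (u2 @ w, v2 @ w) \<notin> R)"

definition has_critical_tuple :: "'a set \<Rightarrow> ('a list \<times> 'a list) set \<Rightarrow> bool" where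
  "has_critical_tuple Alph R \<longleftrightarrow> (\<exists>u2 v2 u v. critical_tuple Alph R u2 v2 u v)"

definition words_upto :: "'a set \<Rightarrow> nat \<Rightarrow> 'a list set" where
  "words_upto Alph n = {w \<in> lists Alph. length w \<le> n}"

definition poly_bounded :: "(nat \<Rightarrow> nat) \<Rightarrow> bool" where
  "poly_bounded f \<longleftrightarrow> (\<exists>c d::nat. \<forall>n. f n \<le> c * (n + 1) ^ d)"

end

(*
  The class of a word w under the suffix expansion is the sequence of R-classes of the
  suffixes of w.  If (u2, v2, u, v) is critical, encoding bit strings by the equal-length
  blocks u^|v| and v^|u| yields 2^k pairwise inequivalent words of length k|u||v|: at the last
  differing bit, u2 and v2 stand at the same position followed by a word of {u,v}^*.

  Conversely, read words from right to left and record the transition (the action on R-classes)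
  of the suffix read so far.  Two words of equal length that lead from the transition of s back
  to it have the same suffix classes, otherwise their differing suffixes would form a critical
  tuple.  Hence, as long as a word can still return, its suffix classes are fixed by its length
  and its transition; once it leaves for good, the set of reachable transitions shrinks
  strictly.  Induction on the number of reachable transitions bounds the number of classes by a
  polynomial whose degree is the number of transitions.
*)

theory Submission
  imports Defs
begin

lemma card_image_le_card_codes:
  assumes "finite C" and has_code: "\<And>x. x \<in> A \<Longrightarrow> \<exists>c \<in> C. P x c"
    and determined: "\<And>x y c. x \<in> A \<Longrightarrow> y \<in> A \<Longrightarrow> P x c \<Longrightarrow> P y c \<Longrightarrow> f x = f y"
  shows "card (f ` A) \<le> card C"
proof (rule surj_card_le[OF assms(1)])
  show "f ` A \<subseteq> (\<lambda>c. f (SOME x. x \<in> A \<and> P x c)) ` C"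
  proof
    fix y assume "y \<in> f ` A"
    then obtain x c where x: "x \<in> A" "y = f x" and c: "c \<in> C" "P x c" using has_code by blast
    hence "(SOME x. x \<in> A \<and> P x c) \<in> A \<and> P (SOME x. x \<in> A \<and> P x c) c" by (intro someI) blast
    hence "y = f (SOME x. x \<in> A \<and> P x c)" using determined x c by blast
    thus "y \<in> (\<lambda>c. f (SOME x. x \<in> A \<and> P x c)) ` C" using c by blast
  qed
qed

lemma power_two_exceeds_polynomial: "\<exists>k. a * (k + 1) ^ d < (2::nat) ^ k"
proof -
  define t :: nat where "t = 2 * d + a + 1"
  define k :: nat where "k = 2 ^ (2 * t) - 1"
  have k_Suc: "k + 1 = 2 ^ (2 * t)" unfolding k_def by simp
  have "t * t < 2 ^ t * 2 ^ t" using less_exp[of t] by (intro mult_strict_mono) auto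
  also have "\<dots> = k + 1" unfolding k_Suc by (simp only: mult_2 power_add)
  finally have "t * t < k + 1" .
  moreover have "a + 2 * t * d < t * t" unfolding t_def by (simp add: algebra_simps)
  ultimately have exponent: "a + 2 * t * d \<le> k" by linarith
  have "a * (k + 1) ^ d = a * 2 ^ (2 * t * d)" unfolding k_Suc by (simp only: power_mult)
  also have "\<dots> < 2 ^ a * 2 ^ (2 * t * d)" using less_exp[of a] by simp
  also have "\<dots> \<le> 2 ^ k" using exponent by (simp add: power_add[symmetric])
  finally show ?thesis by blast
qed

lemma exponential_lower_bound_not_poly_bounded:
  assumes "\<And>k. 2 ^ k \<le> f (m * k)"
  shows "\<not> poly_bounded f"
proof
  assume "poly_bounded f"
  then obtain c d where bound: "\<And>n. f n \<le> c * (n + 1) ^ d" unfolding poly_bounded_def by blast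
  obtain k where k: "c * (m + 1) ^ d * (k + 1) ^ d < 2 ^ k" using power_two_exceeds_polynomial by blast
  have "2 ^ k \<le> c * (m * k + 1) ^ d" using assms bound le_trans by blast
  also have "\<dots> \<le> c * ((m + 1) * (k + 1)) ^ d" by (intro mult_le_mono2 power_mono) simp_all
  also have "\<dots> = c * (m + 1) ^ d * (k + 1) ^ d" by (simp only: power_mult_distrib mult.assoc)
  finally show False using k by simp
qed

lemma equal_length_lists_last_difference:
  "length xs = length ys \<Longrightarrow> xs \<noteq> ys \<Longrightarrow>
    \<exists>p p' x y q. xs = p @ x # q \<and> ys = p' @ y # q \<and> x \<noteq> y \<and> length p = length p'"
proof (induction xs arbitrary: ys)
  case (Cons a xs)
  then obtain b ys' where ys: "ys = b # ys'" by (cases ys) auto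
  show ?case
  proof (cases "xs = ys'")
    case True
    thus ?thesis using Cons.prems ys by (intro exI[of _ "[]"]) auto
  next
    case False
    then obtain p p' x y q where "xs = p @ x # q" "ys' = p' @ y # q" "x \<noteq> y" "length p = length p'"
      using Cons.IH[of ys'] Cons.prems ys by auto
    thus ?thesis using ys by (intro exI[of _ "a # p"] exI[of _ "b # p'"]) auto
  qed
qed simp

lemma word_star_subset_lists:
  assumes "W \<subseteq> lists A"
  shows "word_star W \<subseteq> lists A"
proof
  fix w assume "w \<in> word_star W"
  then obtain ws where "ws \<in> lists W" "w = concat ws" unfolding word_star_def by blast
  thus "w \<in> lists A" using assms by (induction ws arbitrary: w) auto
qed

lemma suffix_expansion_common_suffixD:
  assumes "(x @ u @ z, y @ v @ z) \<in> suffix_expansion Alph R" "length x = length y" "u \<noteq> []"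
  shows "(u @ z, v @ z) \<in> R"
proof -
  have "length x < length (x @ u @ z)" using assms(3) by simp
  hence "(drop (length x) (x @ u @ z), drop (length x) (y @ v @ z)) \<in> R"
    using assms(1) unfolding suffix_expansion_def by blast
  thus ?thesis using assms(2) by simp
qed

lemma critical_tuple_separates:
  assumes "critical_tuple Alph R u2 v2 u v" "length (x @ u) = length (y @ v)" "w \<in> word_star {u, v}"
  shows "(x @ u @ w, y @ v @ w) \<notin> suffix_expansion Alph R"
proof
  obtain u1 v1 where uv: "u = u1 @ u2" "v = v1 @ v2" and len: "length u2 = length v2" "1 \<le> length u2"
    and "(u2 @ w, v2 @ w) \<notin> R"
    using assms(1,3) unfolding critical_tuple_def by blast
  moreover assume "(x @ u @ w, y @ v @ w) \<in> suffix_expansion Alph R"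
  moreover have "length (x @ u1) = length (y @ v1)" using assms(2) uv len by simp
  ultimately show False using suffix_expansion_common_suffixD[of "x @ u1" u2 w "y @ v1" v2 Alph R] by force
qed

definition bit_encoding :: "'a list \<Rightarrow> 'a list \<Rightarrow> bool list \<Rightarrow> 'a list" where
  "bit_encoding u v bs =
     concat (concat (map (\<lambda>b. if b then replicate (length v) u else replicate (length u) v) bs))"

lemma length_bit_encoding: "length (bit_encoding u v bs) = length bs * (length u * length v)"
  by (induction bs) (auto simp: bit_encoding_def length_concat sum_list_replicate)

lemma bit_encoding_in_word_star: "bit_encoding u v bs \<in> word_star {u, v}"
  unfolding bit_encoding_def word_star_def by (rule imageI) (auto split: if_splits)

lemma bit_encoding_append_Cons:
  "bit_encoding u v (p @ b # q) = bit_encoding u v p @ bit_encoding u v [b] @ bit_encoding u v q"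
  by (simp add: bit_encoding_def)

lemma bit_encoding_separates:
  assumes ct: "critical_tuple Alph R u2 v2 u v"
    and "length bs = length bs'" "bs \<noteq> bs'"
  shows "(bit_encoding u v bs, bit_encoding u v bs') \<notin> suffix_expansion Alph R
       \<or> (bit_encoding u v bs', bit_encoding u v bs) \<notin> suffix_expansion Alph R"
proof -
  let ?e = "bit_encoding u v"
  have "u \<noteq> []" "v \<noteq> []" using ct unfolding critical_tuple_def by auto
  then obtain i j where i: "length u = Suc i" and j: "length v = Suc j"
    by (metis length_greater_0_conv Suc_pred)
  have True_False: "(?e (p @ True # q), ?e (p' @ False # q)) \<notin> suffix_expansion Alph R"
    if "length p = length p'" for p p' q
  proof -
    have "?e [True] = concat (replicate j u) @ u" "?e [False] = concat (replicate i v) @ v"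
      by (simp_all add: bit_encoding_def i j replicate_append_same[symmetric])
    moreover have "length (?e p @ concat (replicate j u) @ u) = length (?e p' @ concat (replicate i v) @ v)"
      using that i j by (simp add: length_bit_encoding length_concat sum_list_replicate algebra_simps)
    ultimately show ?thesis
      using critical_tuple_separates[OF ct _ bit_encoding_in_word_star,
          where x = "?e p @ concat (replicate j u)" and y = "?e p' @ concat (replicate i v)"]
      by (simp add: bit_encoding_append_Cons)
  qed
  obtain p p' x y q where "bs = p @ x # q" "bs' = p' @ y # q" "x \<noteq> y" "length p = length p'"
    using equal_length_lists_last_difference[OF assms(2,3)] by blast
  thus ?thesis using True_False[of p p' q] True_False[of p' p q] by (cases x) auto
qed

lemma quotient_eq_image: "A // r = (\<lambda>x. r `` {x}) ` A"
  unfolding quotient_def by blast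

locale finite_index_right_congruence =
  fixes Alph :: "'a set" and R :: "('a list \<times> 'a list) set"
  assumes finite_Alph: "finite Alph"
    and right_congruence: "right_congruence Alph R"
    and finite_index: "finite_index Alph R"
begin

lemma equiv: "equiv (lists Alph) R"
  using right_congruence unfolding right_congruence_def by blast

lemma append_right_mem:
  "(x, y) \<in> R \<Longrightarrow> z \<in> lists Alph \<Longrightarrow> (x @ z, y @ z) \<in> R"
  using right_congruence unfolding right_congruence_def by blast

lemmas class_eq_iff = equiv_class_eq_iff[OF equiv]

lemma drop_in_lists: "w \<in> lists Alph \<Longrightarrow> drop i w \<in> lists Alph"
  by (metis append_take_drop_id append_in_lists_conv)

text \<open>The action \<open>[x] \<mapsto> [x s]\<close> of \<open>s\<close> on the classes of \<open>R\<close>, represented by its graph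
  so that no representatives have to be chosen.\<close>

definition transition :: "'a list \<Rightarrow> ('a list set \<times> 'a list set) set" where
  "transition s = (\<lambda>x. (R `` {x}, R `` {x @ s})) ` lists Alph"

lemma transition_eq_iff:
  assumes "s \<in> lists Alph" "s' \<in> lists Alph"
  shows "transition s = transition s' \<longleftrightarrow> (\<forall>x \<in> lists Alph. (x @ s, x @ s') \<in> R)"
proof
  assume eq: "transition s = transition s'"
  show "\<forall>x \<in> lists Alph. (x @ s, x @ s') \<in> R"
  proof
    fix x assume x: "x \<in> lists Alph"
    have "(R `` {x}, R `` {x @ s}) \<in> transition s'" using eq x unfolding transition_def by blast
    then obtain y where y: "y \<in> lists Alph" "R `` {x} = R `` {y}" "R `` {x @ s} = R `` {y @ s'}"
      unfolding transition_def by blast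
    have "(x @ s', y @ s') \<in> R" using y x assms append_right_mem class_eq_iff by blast
    thus "(x @ s, x @ s') \<in> R" using y x assms class_eq_iff by auto
  qed
next
  assume "\<forall>x \<in> lists Alph. (x @ s, x @ s') \<in> R"
  hence "R `` {x @ s} = R `` {x @ s'}" if "x \<in> lists Alph" for x
    using that equiv_class_eq[OF equiv] by blast
  thus "transition s = transition s'" unfolding transition_def by (auto cong: image_cong)
qed

lemma transition_eq_imp_mem:
  "s \<in> lists Alph \<Longrightarrow> s' \<in> lists Alph \<Longrightarrow> transition s = transition s' \<Longrightarrow> (s, s') \<in> R"
  using transition_eq_iff[of s s'] by (metis append.left_neutral lists.Nil)

lemma transition_append_left:
  assumes "s \<in> lists Alph" "s' \<in> lists Alph" "transition s = transition s'" "p \<in> lists Alph"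
  shows "transition (p @ s) = transition (p @ s')"
  using assms by (simp add: transition_eq_iff) (metis append_assoc append_in_lists_conv)

definition transitions :: "('a list set \<times> 'a list set) set set" where
  "transitions = transition ` lists Alph"

lemma finite_transitions: "finite transitions"
proof (rule finite_subset)
  show "transitions \<subseteq> Pow (lists Alph // R \<times> lists Alph // R)"
    unfolding transitions_def transition_def by (simp add: image_subset_iff quotientI)
  show "finite (Pow (lists Alph // R \<times> lists Alph // R))"
    using finite_index unfolding finite_index_def by simp
qed

lemma card_transitions_pos: "0 < card transitions"
  using finite_transitions unfolding transitions_def by (auto simp: card_gt_0_iff)

definition reachable :: "'a list \<Rightarrow> ('a list set \<times> 'a list set) set set" where
  "reachable s = {transition (t @ s) | t. t \<in> lists Alph}"

lemma reachable_subset_transitions: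
  assumes "s \<in> lists Alph" shows "reachable s \<subseteq> transitions"
proof
  fix q assume "q \<in> reachable s"
  then obtain t where "t \<in> lists Alph" "q = transition (t @ s)" unfolding reachable_def by blast
  thus "q \<in> transitions" using assms unfolding transitions_def by simp
qed

lemma finite_reachable: "s \<in> lists Alph \<Longrightarrow> finite (reachable s)"
  using reachable_subset_transitions finite_transitions by (rule finite_subset)

lemma transition_in_reachable: "transition s \<in> reachable s"
  unfolding reachable_def by (auto intro!: exI[of _ "[]"])

lemma reachable_append_subset:
  assumes "t \<in> lists Alph" shows "reachable (t @ s) \<subseteq> reachable s"
proof
  fix q assume "q \<in> reachable (t @ s)"
  then obtain p where "p @ t \<in> lists Alph" "q = transition ((p @ t) @ s)"
    using assms unfolding reachable_def by auto
  thus "q \<in> reachable s" unfolding reachable_def by blast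
qed

fun suffix_classes :: "'a list \<Rightarrow> 'a list \<Rightarrow> 'a list set list" where
  "suffix_classes s [] = []"
| "suffix_classes s (a # t) = R `` {a # t @ s} # suffix_classes s t"

lemma length_suffix_classes [simp]: "length (suffix_classes s t) = length t"
  by (induction t) auto

lemma suffix_classes_append:
  "suffix_classes s (t @ t') = suffix_classes (t' @ s) t @ suffix_classes s t'"
  by (induction t) auto

lemma nth_suffix_classes: "i < length t \<Longrightarrow> suffix_classes s t ! i = R `` {drop i t @ s}"
proof (induction t arbitrary: i)
  case (Cons a t) thus ?case by (cases i) auto
qed simp

lemma suffix_classes_transition_cong:
  assumes "s \<in> lists Alph" "s' \<in> lists Alph" "transition s = transition s'"
  shows "t \<in> lists Alph \<Longrightarrow> suffix_classes s t = suffix_classes s' t"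
proof (induction t)
  case (Cons a t)
  have "((a # t) @ s, (a # t) @ s') \<in> R" using assms Cons.prems transition_eq_iff by blast
  thus ?case using Cons equiv_class_eq[OF equiv] by simp
qed simp

lemma suffix_expansion_iff:
  assumes "w \<in> lists Alph" "w' \<in> lists Alph"
  shows "(w, w') \<in> suffix_expansion Alph R \<longleftrightarrow> suffix_classes [] w = suffix_classes [] w'"
proof -
  have "(drop i w, drop i w') \<in> R \<longleftrightarrow> R `` {drop i w} = R `` {drop i w'}" for i
    using assms class_eq_iff drop_in_lists by blast
  moreover have "suffix_classes [] w = suffix_classes [] w' \<longleftrightarrow>
      length w = length w' \<and> (\<forall>i < length w. R `` {drop i w} = R `` {drop i w'})"
    unfolding list_eq_iff_nth_eq by (simp add: nth_suffix_classes cong: conj_cong)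
  ultimately show ?thesis using assms unfolding suffix_expansion_def by simp
qed

lemma suffix_expansion_Image:
  assumes "w \<in> lists Alph"
  shows "suffix_expansion Alph R `` {w} = {w' \<in> lists Alph. suffix_classes [] w' = suffix_classes [] w}"
proof -
  have "(w, w') \<in> suffix_expansion Alph R \<longleftrightarrow>
      w' \<in> lists Alph \<and> suffix_classes [] w' = suffix_classes [] w" for w'
  proof (cases "w' \<in> lists Alph")
    case True
    thus ?thesis using suffix_expansion_iff[OF assms True] by auto
  qed (simp add: suffix_expansion_def)
  thus ?thesis by blast
qed

lemma finite_words_upto: "finite (words_upto Alph n)"
  using finite_lists_length_le[OF finite_Alph] unfolding words_upto_def lists_eq_set by simp

lemma transition_word_star:
  assumes s: "s \<in> lists Alph" and uv: "{u, v} \<subseteq> lists Alph"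
    and loops: "transition (u @ s) = transition s" "transition (v @ s) = transition s"
    and w: "w \<in> word_star {u, v}"
  shows "transition (w @ s) = transition s"
proof -
  obtain ws where ws: "ws \<in> lists {u, v}" "w = concat ws" using w unfolding word_star_def by blast
  have "ws \<in> lists {u, v} \<Longrightarrow> transition (concat ws @ s) = transition s" for ws
  proof (induction ws)
    case (Cons z ws)
    have "concat ws \<in> word_star {u, v}" "z \<in> {u, v}"
      using Cons.prems unfolding word_star_def by auto
    hence "concat ws \<in> lists Alph" "z \<in> lists Alph"
      using uv word_star_subset_lists by blast+
    hence "transition (z @ concat ws @ s) = transition (z @ s)"
      using transition_append_left[OF _ s Cons.IH] Cons.prems s by simp
    thus ?case using Cons.prems loops by auto
  qed simp
  thus ?thesis using ws by simp
qed

text \<open>At a position where the suffix classes differ, the remaining suffixes of \<open>u\<close> and \<open>v\<close>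
  form a critical tuple.\<close>

lemma suffix_classes_eq_if_loops:
  assumes no_critical: "\<not> has_critical_tuple Alph R"
    and s: "s \<in> lists Alph" and uv: "u \<in> lists Alph" "v \<in> lists Alph" and len: "length u = length v"
    and loops: "transition (u @ s) = transition s" "transition (v @ s) = transition s"
  shows "suffix_classes s u = suffix_classes s v"
proof (rule ccontr)
  assume "suffix_classes s u \<noteq> suffix_classes s v"
  then obtain i where i: "i < length u" and differ: "R `` {drop i u @ s} \<noteq> R `` {drop i v @ s}"
    using len by (auto simp: list_eq_iff_nth_eq nth_suffix_classes)
  have "critical_tuple Alph R (drop i u) (drop i v) u v"
    unfolding critical_tuple_def
  proof (intro conjI ballI)
    show "drop i u \<in> lists Alph" "drop i v \<in> lists Alph" "u \<in> lists Alph" "v \<in> lists Alph"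
      using uv drop_in_lists by auto
    show "length (drop i u) = length (drop i v)" "1 \<le> length (drop i u)" using i len by auto
    show "\<exists>u1. u = u1 @ drop i u" "\<exists>v1. v = v1 @ drop i v" by (metis append_take_drop_id)+
    fix w assume w: "w \<in> word_star {u, v}"
    have "w @ s \<in> lists Alph" using w uv s word_star_subset_lists[of "{u, v}" Alph] by auto
    moreover have "transition (w @ s) = transition s" using transition_word_star[OF s _ loops w] uv by simp
    ultimately have loop: "R `` {x @ w @ s} = R `` {x @ s}" if "x \<in> lists Alph" for x
      using that s transition_eq_iff equiv_class_eq[OF equiv] by (metis append_assoc)
    show "(drop i u @ w, drop i v @ w) \<notin> R"
    proof
      assume "(drop i u @ w, drop i v @ w) \<in> R"
      hence "R `` {drop i u @ w @ s} = R `` {drop i v @ w @ s}"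
        using append_right_mem[OF _ s] equiv_class_eq[OF equiv] by fastforce
      thus False using differ loop drop_in_lists uv by simp
    qed
  qed
  thus False using no_critical unfolding has_critical_tuple_def by blast
qed

lemma suffix_classes_eq_if_returning:
  assumes no_critical: "\<not> has_critical_tuple Alph R"
    and s: "s \<in> lists Alph" and t: "t \<in> lists Alph" "t' \<in> lists Alph" and len: "length t = length t'"
    and same: "transition (t @ s) = transition (t' @ s)" and returns: "transition s \<in> reachable (t @ s)"
  shows "suffix_classes s t = suffix_classes s t'"
proof -
  obtain p where p: "p \<in> lists Alph" "transition s = transition (p @ t @ s)"
    using returns unfolding reachable_def by blast
  have "transition (p @ t' @ s) = transition s"
    using transition_append_left[OF _ _ same p(1)] p(2) s t by simp
  hence "suffix_classes s (p @ t) = suffix_classes s (p @ t')"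
    using suffix_classes_eq_if_loops[OF no_critical s, of "p @ t" "p @ t'"] p s t len by simp
  thus ?thesis using len by (simp add: suffix_classes_append)
qed

lemma exit_decomposition:
  assumes "t \<in> lists Alph" "transition s \<notin> reachable (t @ s)"
  shows "\<exists>t1 a t2. t = t1 @ a # t2
    \<and> transition s \<in> reachable (t2 @ s) \<and> transition s \<notin> reachable (a # t2 @ s)"
  using assms
proof (induction t)
  case (Cons b t)
  show ?case
  proof (cases "transition s \<in> reachable (t @ s)")
    case True
    thus ?thesis using Cons.prems by (intro exI[of _ "[]"]) auto
  next
    case False
    then obtain t1 a t2 where "t = t1 @ a # t2" "transition s \<in> reachable (t2 @ s)"
        "transition s \<notin> reachable (a # t2 @ s)"
      using Cons by auto
    thus ?thesis by (intro exI[of _ "b # t1"]) auto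
  qed
qed (simp add: transition_in_reachable)

lemma card_suffix_classes_returning:
  assumes no_critical: "\<not> has_critical_tuple Alph R" and s: "s \<in> lists Alph"
  shows "card (suffix_classes s ` {t \<in> words_upto Alph n. transition s \<in> reachable (t @ s)})
    \<le> (n + 1) * card transitions"
proof -
  have "card (suffix_classes s ` {t \<in> words_upto Alph n. transition s \<in> reachable (t @ s)})
      \<le> card ({..n} \<times> transitions)"
    by (rule card_image_le_card_codes[where P = "\<lambda>t c. c = (length t, transition (t @ s))"])
       (use s finite_transitions in \<open>auto simp: words_upto_def transitions_def
          intro: suffix_classes_eq_if_returning[OF no_critical s]\<close>)
  thus ?thesis by (simp add: card_cartesian_product)
qed

text \<open>A word that cannot return to \<open>transition s\<close> is cut at the letter where it leaves for good.
  Its suffix classes are determined by the length and transition of the part behind the cut,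
  the letter, and the suffix classes of the part in front, which is read at a position with
  strictly fewer reachable transitions.\<close>

lemma card_suffix_classes_leaving:
  assumes no_critical: "\<not> has_critical_tuple Alph R" and s: "s \<in> lists Alph"
    and smaller: "\<And>s'. s' \<in> lists Alph \<Longrightarrow> reachable s' \<subset> reachable s \<Longrightarrow>
      card (suffix_classes s' ` words_upto Alph n) \<le> M"
  shows "card (suffix_classes s ` {t \<in> words_upto Alph n. transition s \<notin> reachable (t @ s)})
    \<le> n * card Alph * card transitions * M"
proof -
  let ?L = "{t \<in> words_upto Alph n. transition s \<notin> reachable (t @ s)}"
  define Y where "Y b q = {suffix_classes (b # t2 @ s) t1 | t1 t2. t1 \<in> words_upto Alph n
    \<and> t2 \<in> lists Alph \<and> transition (t2 @ s) = q \<and> transition s \<notin> reachable (b # t2 @ s)}" for b q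
  define exit_code where "exit_code t c \<longleftrightarrow> (\<exists>t1 b t2. t = t1 @ b # t2
    \<and> transition s \<in> reachable (t2 @ s) \<and> transition s \<notin> reachable (b # t2 @ s)
    \<and> c = ((length t2, b, transition (t2 @ s)), suffix_classes (b # t2 @ s) t1))" for t c
  have Y: "finite (Y b q) \<and> card (Y b q) \<le> M" if b: "b \<in> Alph" for b q
  proof (cases "Y b q = {}")
    case False
    then obtain t2 where t2: "t2 \<in> lists Alph" "transition (t2 @ s) = q"
        and leaves: "transition s \<notin> reachable (b # t2 @ s)"
      unfolding Y_def by blast
    have "Y b q \<subseteq> suffix_classes (b # t2 @ s) ` words_upto Alph n"
    proof
      fix c assume "c \<in> Y b q"
      then obtain t1 t2' where "c = suffix_classes (b # t2' @ s) t1" "t1 \<in> words_upto Alph n"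
          "t2' \<in> lists Alph" "transition (t2' @ s) = q"
        unfolding Y_def by blast
      moreover from this have "transition ([b] @ t2' @ s) = transition ([b] @ t2 @ s)"
        using transition_append_left[of "t2' @ s" "t2 @ s" "[b]"] t2 s b by simp
      ultimately show "c \<in> suffix_classes (b # t2 @ s) ` words_upto Alph n"
        using suffix_classes_transition_cong[of "b # t2' @ s" "b # t2 @ s"] t2 s b
        by (auto simp: words_upto_def)
    qed
    moreover have "reachable (b # t2 @ s) \<subset> reachable s"
      using reachable_append_subset[of "b # t2" s] transition_in_reachable[of s] leaves t2 b by auto
    ultimately show ?thesis
      using smaller[of "b # t2 @ s"] finite_words_upto t2 s b
      by (meson Cons_in_lists_iff append_in_lists_conv card_mono finite_imageI finite_subset le_trans)
  qed simp
  have "card (suffix_classes s ` ?L) \<le> card (SIGMA (k, b, q) : {..<n} \<times> Alph \<times> transitions. Y b q)"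
  proof (rule card_image_le_card_codes[where P = exit_code])
    show "finite (SIGMA (k, b, q) : {..<n} \<times> Alph \<times> transitions. Y b q)"
      using finite_Alph finite_transitions Y by (intro finite_SigmaI) auto
  next
    fix t assume t: "t \<in> ?L"
    then obtain t1 b t2 where split: "t = t1 @ b # t2" and returns: "transition s \<in> reachable (t2 @ s)"
        and leaves: "transition s \<notin> reachable (b # t2 @ s)"
      using exit_decomposition unfolding words_upto_def by blast
    have "length t2 < n" "t1 \<in> words_upto Alph n" "t2 \<in> lists Alph" "b \<in> Alph"
      using t unfolding split words_upto_def by auto
    moreover have "transition (t2 @ s) \<in> transitions"
      using \<open>t2 \<in> lists Alph\<close> s unfolding transitions_def by simp
    moreover have "suffix_classes (b # t2 @ s) t1 \<in> Y b (transition (t2 @ s))"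
      unfolding Y_def using \<open>t1 \<in> words_upto Alph n\<close> \<open>t2 \<in> lists Alph\<close> leaves by blast
    ultimately have "((length t2, b, transition (t2 @ s)), suffix_classes (b # t2 @ s) t1)
        \<in> (SIGMA (k, b, q) : {..<n} \<times> Alph \<times> transitions. Y b q)"
      by simp
    thus "\<exists>c \<in> (SIGMA (k, b, q) : {..<n} \<times> Alph \<times> transitions. Y b q). exit_code t c"
      unfolding exit_code_def using split returns leaves by blast
  next
    fix t t' c assume L: "t \<in> ?L" "t' \<in> ?L" and "exit_code t c" "exit_code t' c"
    then obtain t1 b t2 t1' t2' where
        split: "t = t1 @ b # t2" "t' = t1' @ b # t2'" and returns: "transition s \<in> reachable (t2 @ s)"
        and same: "length t2 = length t2'" "transition (t2 @ s) = transition (t2' @ s)"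
          "suffix_classes (b # t2 @ s) t1 = suffix_classes (b # t2' @ s) t1'"
      unfolding exit_code_def by auto
    have lists: "t2 \<in> lists Alph" "t2' \<in> lists Alph" "b \<in> Alph"
      using L unfolding split words_upto_def by auto
    have "suffix_classes s t2 = suffix_classes s t2'"
      using suffix_classes_eq_if_returning[OF no_critical s lists(1,2) same(1,2) returns] .
    moreover have "transition ([b] @ t2 @ s) = transition ([b] @ t2' @ s)"
      using transition_append_left[OF _ _ same(2), of "[b]"] lists s by simp
    hence "R `` {b # t2 @ s} = R `` {b # t2' @ s}"
      using transition_eq_imp_mem lists s equiv_class_eq[OF equiv] by simp
    ultimately show "suffix_classes s t = suffix_classes s t'"
      using split same(3) by (simp add: suffix_classes_append)
  qed
  also have "\<dots> = (\<Sum>(k, b, q) \<in> {..<n} \<times> Alph \<times> transitions. card (Y b q))"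
    using finite_Alph finite_transitions Y by (subst card_SigmaI) (auto simp: case_prod_beta)
  also have "\<dots> \<le> (\<Sum>(k, b, q) \<in> {..<n} \<times> Alph \<times> transitions. M)"
    using Y by (intro sum_mono) auto
  also have "\<dots> = n * card Alph * card transitions * M"
    by (simp add: card_cartesian_product case_prod_beta)
  finally show ?thesis .
qed

lemma card_suffix_classes_le:
  assumes no_critical: "\<not> has_critical_tuple Alph R"
  shows "s \<in> lists Alph \<Longrightarrow> card (suffix_classes s ` words_upto Alph n)
    \<le> ((card Alph + 1) * card transitions * (n + 1)) ^ card (reachable s)"
proof (induction "card (reachable s)" arbitrary: s rule: less_induct)
  case less
  let ?B = "(card Alph + 1) * card transitions * (n + 1)"
  let ?M = "?B ^ (card (reachable s) - 1)"
  have "1 \<le> ?B" using card_transitions_pos by simp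
  hence "1 \<le> ?M" by simp
  have "card (reachable s) \<noteq> 0"
    using finite_reachable[OF less.prems] transition_in_reachable[of s] by auto
  hence B_M: "?B * ?M = ?B ^ card (reachable s)" by (simp add: power_eq_if)
  have smaller: "card (suffix_classes s' ` words_upto Alph n) \<le> ?M"
    if "s' \<in> lists Alph" "reachable s' \<subset> reachable s" for s'
  proof -
    have "card (reachable s') < card (reachable s)"
      using psubset_card_mono[OF finite_reachable[OF less.prems] that(2)] .
    hence "card (suffix_classes s' ` words_upto Alph n) \<le> ?B ^ card (reachable s')"
      using less.hyps that(1) by blast
    also have "\<dots> \<le> ?M"
      using \<open>1 \<le> ?B\<close> \<open>card (reachable s') < card (reachable s)\<close> by (intro power_increasing) auto
    finally show ?thesis .
  qed
  have "suffix_classes s ` words_upto Alph n =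
      suffix_classes s ` {t \<in> words_upto Alph n. transition s \<in> reachable (t @ s)}
    \<union> suffix_classes s ` {t \<in> words_upto Alph n. transition s \<notin> reachable (t @ s)}"
    (is "_ = ?returning \<union> ?leaving") by blast
  hence "card (suffix_classes s ` words_upto Alph n)
      \<le> card ?returning + card ?leaving"
    by (simp only: card_Un_le)
  also have "\<dots> \<le> (n + 1) * card transitions + n * card Alph * card transitions * ?M"
    by (intro add_mono card_suffix_classes_returning card_suffix_classes_leaving no_critical less.prems
        smaller)
  also have "\<dots> \<le> (n + 1) * card transitions * ?M + (n + 1) * card Alph * card transitions * ?M"
    using \<open>1 \<le> ?M\<close> by (intro add_mono) simp_all
  also have "\<dots> = ?B ^ card (reachable s)" unfolding B_M[symmetric] by (simp add: algebra_simps)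
  finally show ?case .
qed

lemma poly_bounded_if_no_critical_tuple:
  assumes "\<not> has_critical_tuple Alph R"
  shows "poly_bounded (\<lambda>n. card (words_upto Alph n // suffix_expansion Alph R))"
  unfolding poly_bounded_def
proof (intro exI allI)
  fix n
  let ?B = "(card Alph + 1) * card transitions"
  have "card (words_upto Alph n // suffix_expansion Alph R)
      \<le> card (suffix_classes [] ` words_upto Alph n)"
    unfolding quotient_eq_image
  proof (rule card_image_le_card_codes[where P = "\<lambda>w c. c = suffix_classes [] w"])
    show "finite (suffix_classes [] ` words_upto Alph n)" using finite_words_upto by simp
  qed (auto simp: words_upto_def suffix_expansion_Image)
  also have "\<dots> \<le> (?B * (n + 1)) ^ card (reachable [])"
    using card_suffix_classes_le[OF assms] by simp
  also have "\<dots> \<le> (?B * (n + 1)) ^ card transitions"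
    using card_transitions_pos reachable_subset_transitions[of "[]"] finite_transitions
    by (intro power_increasing card_mono) auto
  finally show "card (words_upto Alph n // suffix_expansion Alph R)
      \<le> ?B ^ card transitions * (n + 1) ^ card transitions"
    by (simp only: power_mult_distrib)
qed

lemma not_poly_bounded_if_critical_tuple:
  assumes "has_critical_tuple Alph R"
  shows "\<not> poly_bounded (\<lambda>n. card (words_upto Alph n // suffix_expansion Alph R))"
proof -
  obtain u2 v2 u v where ct: "critical_tuple Alph R u2 v2 u v"
    using assms unfolding has_critical_tuple_def by blast
  have "{u, v} \<subseteq> lists Alph" using ct unfolding critical_tuple_def by simp
  hence code_in_lists: "bit_encoding u v bs \<in> lists Alph" for bs
    by (rule subsetD[OF word_star_subset_lists bit_encoding_in_word_star])
  let ?code = "\<lambda>bs. suffix_expansion Alph R `` {bit_encoding u v bs}"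
  have "2 ^ k \<le> card (words_upto Alph (length u * length v * k) // suffix_expansion Alph R)" for k
  proof -
    let ?Bits = "{bs :: bool list. length bs = k}"
    have "inj_on ?code ?Bits"
    proof (rule inj_onI)
      fix bs bs' assume "bs \<in> ?Bits" "bs' \<in> ?Bits" and same_class: "?code bs = ?code bs'"
      have "bit_encoding u v bs \<in> ?code bs" "bit_encoding u v bs' \<in> ?code bs'"
        using code_in_lists by (simp_all add: suffix_expansion_Image)
      hence "(bit_encoding u v bs, bit_encoding u v bs') \<in> suffix_expansion Alph R"
          "(bit_encoding u v bs', bit_encoding u v bs) \<in> suffix_expansion Alph R"
        using same_class by blast+
      thus "bs = bs'"
        using bit_encoding_separates[OF ct, of bs bs'] \<open>bs \<in> ?Bits\<close> \<open>bs' \<in> ?Bits\<close> by auto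
    qed
    moreover have "?code ` ?Bits \<subseteq> words_upto Alph (length u * length v * k) // suffix_expansion Alph R"
      using code_in_lists by (auto simp: words_upto_def length_bit_encoding intro!: quotientI)
    moreover have "finite (words_upto Alph (length u * length v * k) // suffix_expansion Alph R)"
      unfolding quotient_eq_image using finite_words_upto by simp
    ultimately have "card ?Bits \<le> card (words_upto Alph (length u * length v * k) // suffix_expansion Alph R)"
      by (rule card_inj_on_le)
    thus ?thesis using card_lists_length_eq[of "UNIV :: bool set" k] by simp
  qed
  thus ?thesis by (rule exponential_lower_bound_not_poly_bounded)
qed

end

theorem theorem18:
  fixes Alph :: "'a set" and R :: "('a list \<times> 'a list) set"
  assumes "finite Alph"
    and "right_congruence Alph R"
    and "finite_index Alph R"
  shows "poly_bounded (\<lambda>n. card (words_upto Alph n // suffix_expansion Alph R))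
         \<longleftrightarrow> \<not> has_critical_tuple Alph R"
proof -
  interpret finite_index_right_congruence Alph R using assms by unfold_locales
  show ?thesis using poly_bounded_if_no_critical_tuple not_poly_bounded_if_critical_tuple by blast
qed

end
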